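(* Let $(A,\cdot,\alpha)$ be a Hom-Malcev algebra over a field $\mathbb{K}$ of characteristic $0$, and define for $w,x,y,z\in A$ $$G(w,x,y,z)=J_{\alpha}(w\cdot x,\alpha(y),\alpha(z))-\alpha^{2}(x)\cdot J_{\alpha}(w,y,z)-J_{\alpha}(x,y,z)\cdot\alpha^{2}(w).$$ Then for all $w,x,y,z\in A$, $$G(w,x,y,z)=2\big[J_{\alpha}(w\cdot x,\alpha(y),\alpha(z))+J_{\alpha}(y\cdot z,\alpha(w),\alpha(x))\big].$$
   Context: A multiplicative Hom-algebra is a triple $(A,\cdot,\alpha)$ with $A$ a vector space over $\mathbb{K}$, $\cdot$ bilinear, and $\alpha$ linear with $\alpha(x\cdot y)=\alpha(x)\cdot\alpha(y)$; anticommutative means $x\cdot y=-y\cdot x$. The Hom-Jacobian is $J_{\alpha}(x,y,z)=(x\cdot y)\cdot\alpha(z)+(y\cdot z)\cdot\alpha(x)+(z\cdot x)\cdot\alpha(y)$. A Hom-Malcev algebra is an anticommutative multiplicative Hom-algebra satisfying $J_{\alpha}(\alpha(x),\alpha(y),x\cdot z)=J_{\alpha}(x,y,z)\cdot\alpha^{2}(x)$ for all $x,y,z\in A$. *)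

theory Defs
  imports Complex_Main
begin

definition hom_jacobian :: "('a \<Rightarrow> 'a \<Rightarrow> 'a::ab_group_add) \<Rightarrow> ('a \<Rightarrow> 'a) \<Rightarrow> 'a \<Rightarrow> 'a \<Rightarrow> 'a \<Rightarrow> 'a" where
  "hom_jacobian mult \<alpha> x y z =
     mult (mult x y) (\<alpha> z) + mult (mult y z) (\<alpha> x) + mult (mult z x) (\<alpha> y)"

definition hom_malcev ::
  "('k::field \<Rightarrow> 'a \<Rightarrow> 'a::ab_group_add) \<Rightarrow> ('a \<Rightarrow> 'a \<Rightarrow> 'a) \<Rightarrow> ('a \<Rightarrow> 'a) \<Rightarrow> bool" where
  "hom_malcev scale mult \<alpha> \<longleftrightarrow>
     vector_space scale \<and>
     (\<forall>y. module_hom scale scale (\<lambda>x. mult x y)) \<and>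
     (\<forall>x. module_hom scale scale (\<lambda>y. mult x y)) \<and>
     module_hom scale scale \<alpha> \<and>
     (\<forall>x y. \<alpha> (mult x y) = mult (\<alpha> x) (\<alpha> y)) \<and>
     (\<forall>x y. mult x y = - mult y x) \<and>
     (\<forall>x y z. hom_jacobian mult \<alpha> (\<alpha> x) (\<alpha> y) (mult x z)
                = mult (hom_jacobian mult \<alpha> x y z) (\<alpha> (\<alpha> x)))"

end

theory Submission
  imports Defs
begin

text \<open>Polarizing the Hom-Malcev identity in its repeated variable gives a multilinear identity
  \<open>\<Lambda>(a, d, b, c) = 0\<close>. After expanding all Jacobians, twice the difference
  \<open>G(w, x, y, z) - 2[J(wx, \<alpha>y, \<alpha>z) + J(yz, \<alpha>w, \<alpha>x)]\<close> is, modulo anticommutativity,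
  a signed sum of five instances of \<open>\<Lambda>\<close> (\<open>linearized_malcev\<close>) with \<open>a = w\<close>, hence
  zero; in characteristic 0 the difference itself vanishes.\<close>

lemma (in module) scale_two: "scale 2 v = v + v"
  using scale_left_distrib[of 1 1 v] by (simp add: one_add_one)

lemma module_double_eq_zero_imp_eq_zero:
  fixes scale :: "'k::field_char_0 \<Rightarrow> 'a::ab_group_add \<Rightarrow> 'a" and v :: 'a
  assumes "module scale" and "v + v = 0"
  shows "v = 0"
proof -
  interpret module scale by fact
  have "v = scale (1/2) (v + v)"
    by (simp add: scale_right_distrib flip: scale_left_distrib)
  with \<open>v + v = 0\<close> show ?thesis by simp
qed

locale hom_malcev_algebra =
  fixes scale :: "'k::field \<Rightarrow> 'a::ab_group_add \<Rightarrow> 'a"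
    and mult :: "'a \<Rightarrow> 'a \<Rightarrow> 'a" and \<alpha> :: "'a \<Rightarrow> 'a"
  assumes hom_malcev: "hom_malcev scale mult \<alpha>"
begin

abbreviation J :: "'a \<Rightarrow> 'a \<Rightarrow> 'a \<Rightarrow> 'a" where
  "J \<equiv> hom_jacobian mult \<alpha>"

lemma module_hom_mult_left: "module_hom scale scale (\<lambda>x. mult x y)"
  and module_hom_mult_right: "module_hom scale scale (\<lambda>y. mult x y)"
  and module_hom_alpha: "module_hom scale scale \<alpha>"
  and alpha_mult: "\<alpha> (mult x y) = mult (\<alpha> x) (\<alpha> y)"
  and mult_anticomm: "mult x y = - mult y x"
  and malcev_identity: "J (\<alpha> x) (\<alpha> y) (mult x z) = mult (J x y z) (\<alpha> (\<alpha> x))"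
  using hom_malcev unfolding hom_malcev_def by blast+

lemma module_scale: "module scale"
  using module_hom_alpha module_hom_iff by blast

lemmas mult_add_left = module_hom.add[OF module_hom_mult_left]
lemmas mult_add_right = module_hom.add[OF module_hom_mult_right]
lemmas mult_minus_left = module_hom.neg[OF module_hom_mult_left]
lemmas mult_minus_right = module_hom.neg[OF module_hom_mult_right]
lemmas alpha_add = module_hom.add[OF module_hom_alpha]

lemmas hom_jacobian_expand =
  hom_jacobian_def mult_add_left mult_add_right alpha_add alpha_mult

definition linearized_malcev :: "'a \<Rightarrow> 'a \<Rightarrow> 'a \<Rightarrow> 'a \<Rightarrow> 'a" where
  "linearized_malcev a d b c =
     J (\<alpha> a) (\<alpha> b) (mult d c) + J (\<alpha> d) (\<alpha> b) (mult a c)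
     - mult (J d b c) (\<alpha> (\<alpha> a)) - mult (J a b c) (\<alpha> (\<alpha> d))"

lemma linearized_malcev_eq_0: "linearized_malcev a d b c = 0"
proof -
  have "linearized_malcev a d b c =
      (J (\<alpha> (a + d)) (\<alpha> b) (mult (a + d) c) - mult (J (a + d) b c) (\<alpha> (\<alpha> (a + d))))
    - (J (\<alpha> a) (\<alpha> b) (mult a c) - mult (J a b c) (\<alpha> (\<alpha> a)))
    - (J (\<alpha> d) (\<alpha> b) (mult d c) - mult (J d b c) (\<alpha> (\<alpha> d)))"
    unfolding linearized_malcev_def by (simp only: hom_jacobian_expand) (simp add: algebra_simps)
  then show ?thesis
    by (simp add: malcev_identity)
qed

definition malcev_G :: "'a \<Rightarrow> 'a \<Rightarrow> 'a \<Rightarrow> 'a \<Rightarrow> 'a" where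
  "malcev_G w x y z =
     J (mult w x) (\<alpha> y) (\<alpha> z) - mult (\<alpha> (\<alpha> x)) (J w y z) - mult (J x y z) (\<alpha> (\<alpha> w))"

lemma malcev_G_defect_double_eq:
  fixes w x y z :: 'a
  defines "K \<equiv> J (mult w x) (\<alpha> y) (\<alpha> z) + J (mult y z) (\<alpha> w) (\<alpha> x)"
  shows "(malcev_G w x y z - (K + K)) + (malcev_G w x y z - (K + K)) =
      linearized_malcev w z x y - linearized_malcev w y z x
    - linearized_malcev w y x z - linearized_malcev w y x z - linearized_malcev w x y z"
proof -
  \<comment> \<open>Anticommutativity, oriented so that both sides reach the same normal form.\<close>
  have swap_alpha: "mult (\<alpha> u) (mult a b) = - mult (mult a b) (\<alpha> u)" for u a b
    by (rule mult_anticomm)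
  note swap = swap_alpha
    mult_anticomm[of x w] mult_anticomm[of y w] mult_anticomm[of z w]
    mult_anticomm[of y x] mult_anticomm[of z x] mult_anticomm[of z y]
    mult_anticomm[of "\<alpha> x" "\<alpha> w"] mult_anticomm[of "\<alpha> y" "\<alpha> w"] mult_anticomm[of "\<alpha> z" "\<alpha> w"]
    mult_anticomm[of "\<alpha> y" "\<alpha> x"] mult_anticomm[of "\<alpha> z" "\<alpha> x"] mult_anticomm[of "\<alpha> z" "\<alpha> y"]
    mult_anticomm[of "mult (\<alpha> x) (\<alpha> y)" "mult (\<alpha> w) (\<alpha> z)"]
    mult_anticomm[of "mult (\<alpha> x) (\<alpha> z)" "mult (\<alpha> w) (\<alpha> y)"]
    mult_anticomm[of "mult (\<alpha> y) (\<alpha> z)" "mult (\<alpha> w) (\<alpha> x)"]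
  show ?thesis
    unfolding K_def malcev_G_def linearized_malcev_def
    by (simp only: hom_jacobian_expand) (simp only: swap mult_minus_left mult_minus_right minus_minus,
        simp add: algebra_simps)
qed

end

theorem lemma2p7:
  fixes scale :: "'k::field_char_0 \<Rightarrow> 'a::ab_group_add \<Rightarrow> 'a"
    and mult :: "'a \<Rightarrow> 'a \<Rightarrow> 'a" and \<alpha> :: "'a \<Rightarrow> 'a"
  assumes "hom_malcev scale mult \<alpha>"
  shows "\<forall>w x y z.
    hom_jacobian mult \<alpha> (mult w x) (\<alpha> y) (\<alpha> z)
      - mult (\<alpha> (\<alpha> x)) (hom_jacobian mult \<alpha> w y z)
      - mult (hom_jacobian mult \<alpha> x y z) (\<alpha> (\<alpha> w))
    = scale 2 (hom_jacobian mult \<alpha> (mult w x) (\<alpha> y) (\<alpha> z)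
               + hom_jacobian mult \<alpha> (mult y z) (\<alpha> w) (\<alpha> x))"
proof (intro allI)
  fix w x y z
  interpret hom_malcev_algebra scale mult \<alpha>
    using assms by unfold_locales
  let ?K = "J (mult w x) (\<alpha> y) (\<alpha> z) + J (mult y z) (\<alpha> w) (\<alpha> x)"
  have "(malcev_G w x y z - (?K + ?K)) + (malcev_G w x y z - (?K + ?K)) = 0"
    unfolding malcev_G_defect_double_eq linearized_malcev_eq_0 by simp
  then have "malcev_G w x y z - (?K + ?K) = 0"
    by (rule module_double_eq_zero_imp_eq_zero[OF module_scale])
  then have "malcev_G w x y z = scale 2 ?K"
    by (simp add: module.scale_two[OF module_scale])
  then show "J (mult w x) (\<alpha> y) (\<alpha> z) - mult (\<alpha> (\<alpha> x)) (J w y z) - mult (J x y z) (\<alpha> (\<alpha> w))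
      = scale 2 ?K"
    unfolding malcev_G_def .
qed

end
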